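(* Let $E$ be an $\mathbb{R}$-group, $X$ a locally compact (Hausdorff) space not reduced to one point, and $\mathcal{H}=(H_\varepsilon)_{\varepsilon\in E}$ a continuous action of $E$ on $X$. Suppose $\omega\in X$ satisfies condition (ABS). Then: (i) $H_\varepsilon(\omega)=\omega$ for all $\varepsilon\in E$; (ii) $\omega$ is the only point of $X$ satisfying (ABS).
   Context: An $\mathbb{R}$-group is an abelian group $E$ (operation written multiplicatively, $\varepsilon\varepsilon'$) whose underlying set is a subset of $\mathbb{R}$ containing all positive integers, such that: (RG1) with the natural order of $\mathbb{R}$, $E$ is a totally ordered group (the order is compatible with the group operation); (RG2) with the topology induced from $\mathbb{R}$, $E$ is a locally compact group; (RG3) there is at least one nonconstant continuous group homomorphism $h:E\to\mathbb{R}_+^*$ (the multiplicative group of positive reals) such that for every $\alpha\in E$ the set $E_\alpha=\{\varepsilon\in E:\varepsilon\ge\alpha\}$ is integrable for the measure $h\cdot m$, where $m$ is a Haar measure on $E$. Examples: $(\mathbb{R},+)$, $(\mathbb{Z},+)$, $(\mathbb{R}_+^*,\cdot)$. $e$ denotes the identity of $E$, $\varepsilon^{-1}$ the group inverse of $\varepsilon$, and $\theta=\inf E\in\mathbb{R}\cup\{\pm\infty\}$. Inequalities between elements of $E$ refer to the order of $\mathbb{R}$; "$\varepsilon\to\theta$" means $\varepsilon\to\theta$ within $E$. An action of $E$ on a set $X$ is a family $\mathcal{H}=(H_\varepsilon)_{\varepsilon\in E}$ of bijections of $X$ with $H_\varepsilon\circ H_{\varepsilon'}=H_{\varepsilon\varepsilon'}$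 and $H_e=\mathrm{id}_X$. It is continuous if $(\varepsilon,x)\mapsto H_\varepsilon(x)$ is continuous from $E\times X$ to $X$. A point $\omega\in X$ satisfies (ABS) if for every neighbourhood $V$ of $\omega$ and every $x\in X$ there exist a neighbourhood $U$ of $x$ and $\alpha\in E$ such that $H_{\varepsilon^{-1}}(U)\subset V$ for all $\varepsilon\in E$ with $\varepsilon\le\alpha$. *)

theory Defs
  imports "HOL-Analysis.Analysis"
begin

definition abelian_group_on :: "real set \<Rightarrow> (real \<Rightarrow> real \<Rightarrow> real) \<Rightarrow> real \<Rightarrow> (real \<Rightarrow> real) \<Rightarrow> bool" where
  "abelian_group_on E mul e iv \<longleftrightarrow>
     (\<forall>a\<in>E. \<forall>b\<in>E. mul a b \<in> E) \<and>
     (\<forall>a\<in>E. \<forall>b\<in>E. \<forall>c\<in>E. mul (mul a b) c = mul a (mul b c)) \<and>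
     (\<forall>a\<in>E. \<forall>b\<in>E. mul a b = mul b a) \<and>
     e \<in> E \<and> (\<forall>a\<in>E. mul e a = a) \<and>
     (\<forall>a\<in>E. iv a \<in> E \<and> mul (iv a) a = e)"

definition haar_measure_on :: "real set \<Rightarrow> (real \<Rightarrow> real \<Rightarrow> real) \<Rightarrow> real measure \<Rightarrow> bool" where
  "haar_measure_on E mul m \<longleftrightarrow>
     space m = E \<and> sets m = sets (restrict_space borel E) \<and>
     (\<forall>a\<in>E. \<forall>A\<in>sets m. emeasure m ((\<lambda>x. mul a x) ` A) = emeasure m A) \<and>
     (\<forall>K. compact K \<and> K \<subseteq> E \<longrightarrow> emeasure m K < \<infinity>) \<and>
     (\<forall>U. openin (top_of_set E) U \<and> U \<noteq> {} \<longrightarrow> emeasure m U > 0)"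

definition R_group :: "real set \<Rightarrow> (real \<Rightarrow> real \<Rightarrow> real) \<Rightarrow> real \<Rightarrow> (real \<Rightarrow> real) \<Rightarrow> bool" where
  "R_group E mul e iv \<longleftrightarrow>
     abelian_group_on E mul e iv \<and>
     (\<forall>n::nat. n \<ge> 1 \<longrightarrow> real n \<in> E) \<and>
     \<comment> \<open>(RG1) compatibility of the natural order with the group law\<close>
     (\<forall>a\<in>E. \<forall>b\<in>E. \<forall>c\<in>E. a \<le> b \<longrightarrow> mul a c \<le> mul b c) \<and>
     \<comment> \<open>(RG2) locally compact topological group for the induced topology\<close>
     continuous_on (E \<times> E) (\<lambda>(a, b). mul a b) \<and>
     continuous_on E iv \<and>
     locally_compact_space (top_of_set E) \<and>
     \<comment> \<open>(RG3)\<close>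
     (\<exists>(h::real \<Rightarrow> real) m. (\<forall>a\<in>E. h a > 0) \<and>
            (\<forall>a\<in>E. \<forall>b\<in>E. h (mul a b) = h a * h b) \<and>
            continuous_on E h \<and>
            (\<exists>a\<in>E. \<exists>b\<in>E. h a \<noteq> h b) \<and>
            haar_measure_on E mul m \<and>
            (\<forall>\<alpha>\<in>E. set_integrable m {\<epsilon>\<in>E. \<epsilon> \<ge> \<alpha>} h))"

definition continuous_action :: "real set \<Rightarrow> (real \<Rightarrow> real \<Rightarrow> real) \<Rightarrow> real \<Rightarrow> 'a topology \<Rightarrow> (real \<Rightarrow> 'a \<Rightarrow> 'a) \<Rightarrow> bool" where
  "continuous_action E mul e X H \<longleftrightarrow>
     (\<forall>\<epsilon>\<in>E. bij_betw (H \<epsilon>) (topspace X) (topspace X)) \<and>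
     (\<forall>\<epsilon>\<in>E. \<forall>\<epsilon>'\<in>E. \<forall>x\<in>topspace X. H \<epsilon> (H \<epsilon>' x) = H (mul \<epsilon> \<epsilon>') x) \<and>
     (\<forall>x\<in>topspace X. H e x = x) \<and>
     continuous_map (prod_topology (top_of_set E) X) X (\<lambda>(\<epsilon>, x). H \<epsilon> x)"

definition nbhd_of :: "'a topology \<Rightarrow> 'a set \<Rightarrow> 'a \<Rightarrow> bool" where
  "nbhd_of X V x \<longleftrightarrow> V \<subseteq> topspace X \<and> (\<exists>W. openin X W \<and> x \<in> W \<and> W \<subseteq> V)"

definition ABS :: "real set \<Rightarrow> (real \<Rightarrow> real) \<Rightarrow> 'a topology \<Rightarrow> (real \<Rightarrow> 'a \<Rightarrow> 'a) \<Rightarrow> 'a \<Rightarrow> bool" where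
  "ABS E iv X H \<omega> \<longleftrightarrow>
     (\<forall>V. nbhd_of X V \<omega> \<longrightarrow>
        (\<forall>x\<in>topspace X. \<exists>U \<alpha>. nbhd_of X U x \<and> \<alpha> \<in> E \<and>
            (\<forall>\<epsilon>\<in>E. \<epsilon> \<le> \<alpha> \<longrightarrow> H (iv \<epsilon>) ` U \<subseteq> V)))"

end

theory Submission
  imports Defs
begin

(* Idea: introduce the filter "epsilon tends to inf E within E", generated by the lower
   sections {epsilon in E. epsilon <= alpha}.  Condition (ABS) at p says in particular that
   for every x the orbit epsilon |-> H (iv epsilon) x converges to p along this filter.
   The filter is proper, so in a Hausdorff space limits are unique.  Hence
   (ii) two (ABS) points are both limits of the orbit of one of them, so they coincide;
   (i) for a in E, the continuous map H a sends the orbit of omega (limit omega) to the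
       orbit of H a omega (the action is abelian), whose limit is omega by (ABS);
       so H a omega = omega. *)

definition towards_inf :: "'b::linorder set \<Rightarrow> 'b filter" where
  "towards_inf E = (INF \<alpha>\<in>E. principal {\<epsilon>\<in>E. \<epsilon> \<le> \<alpha>})"

text \<open>Lower sections are totally ordered by inclusion, so the filter is described by them.\<close>
lemma eventually_towards_inf:
  fixes E :: "'b::linorder set"
  assumes "E \<noteq> {}"
  shows "eventually P (towards_inf E) \<longleftrightarrow> (\<exists>\<alpha>\<in>E. \<forall>\<epsilon>\<in>E. \<epsilon> \<le> \<alpha> \<longrightarrow> P \<epsilon>)"
proof -
  have directed: "\<exists>\<gamma>\<in>E. principal {\<epsilon>\<in>E. \<epsilon> \<le> \<gamma>}
                    \<le> inf (principal {\<epsilon>\<in>E. \<epsilon> \<le> \<alpha>}) (principal {\<epsilon>\<in>E. \<epsilon> \<le> \<beta>})"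
    if "\<alpha> \<in> E" "\<beta> \<in> E" for \<alpha> \<beta>
    using that by (intro bexI[of _ "min \<alpha> \<beta>"]) (auto simp: min_def)
  have "eventually P (towards_inf E) \<longleftrightarrow>
          (\<exists>\<alpha>\<in>E. eventually P (principal {\<epsilon>\<in>E. \<epsilon> \<le> \<alpha>}))"
    unfolding towards_inf_def by (rule eventually_INF_base[OF assms directed])
  then show ?thesis
    by (auto simp: eventually_principal)
qed

text \<open>Every lower section contains its top element, so the filter is proper.\<close>
lemma towards_inf_nontrivial:
  fixes E :: "'b::linorder set"
  assumes "E \<noteq> {}"
  shows "\<not> trivial_limit (towards_inf E)"
  using eventually_towards_inf[OF assms, of "\<lambda>_. False"] by auto

lemma ABS_orbit_limit:
  assumes "E \<noteq> {}" and "ABS E iv X H p" and "p \<in> topspace X" and "x \<in> topspace X"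
  shows "limitin X (\<lambda>\<epsilon>. H (iv \<epsilon>) x) p (towards_inf E)"
  unfolding limitin_def
proof (intro conjI allI impI)
  fix V assume "openin X V \<and> p \<in> V"
  then have "nbhd_of X V p"
    using openin_subset unfolding nbhd_of_def by blast
  then obtain U \<alpha> where "nbhd_of X U x" "\<alpha> \<in> E" "\<forall>\<epsilon>\<in>E. \<epsilon> \<le> \<alpha> \<longrightarrow> H (iv \<epsilon>) ` U \<subseteq> V"
    using assms(2,4) unfolding ABS_def by blast
  moreover have "x \<in> U"
    using \<open>nbhd_of X U x\<close> unfolding nbhd_of_def by blast
  ultimately show "eventually (\<lambda>\<epsilon>. H (iv \<epsilon>) x \<in> V) (towards_inf E)"
    unfolding eventually_towards_inf[OF assms(1)] by blast
qed (use assms(3) in blast)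

lemma ABS_point_unique:
  assumes "Hausdorff_space X" and "E \<noteq> {}"
    and "ABS E iv X H p" "p \<in> topspace X" and "ABS E iv X H q" "q \<in> topspace X"
  shows "p = q"
  using limitin_Hausdorff_unique[OF ABS_orbit_limit[OF assms(2,3,4,4)]
      ABS_orbit_limit[OF assms(2,5,6,4)] towards_inf_nontrivial[OF assms(2)] assms(1)] .

lemma continuous_action_continuous_map:
  assumes "continuous_action E mul e X H" and "a \<in> E"
  shows "continuous_map X X (H a)"
proof -
  have slice: "continuous_map X (prod_topology (top_of_set E) X) (\<lambda>x. (a, x))"
    using assms(2) by (simp add: continuous_map_pairwise o_def)
  have joint: "continuous_map (prod_topology (top_of_set E) X) X (\<lambda>(\<epsilon>, x). H \<epsilon> x)"
    using assms(1) by (simp add: continuous_action_def)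
  from continuous_map_compose[OF slice joint] show ?thesis
    by (simp add: o_def)
qed

lemma abelian_action_commute:
  assumes "abelian_group_on E mul e iv" and "continuous_action E mul e X H"
    and "a \<in> E" "b \<in> E" "x \<in> topspace X"
  shows "H a (H b x) = H b (H a x)"
proof -
  have "H a (H b x) = H (mul a b) x" and "H b (H a x) = H (mul b a) x"
    using assms(2-5) by (simp_all add: continuous_action_def)
  moreover have "mul a b = mul b a"
    using assms(1,3,4) unfolding abelian_group_on_def by blast
  ultimately show ?thesis by simp
qed

text \<open>The image under \<open>H a\<close> of the orbit of \<open>\<omega>\<close> is the orbit of \<open>H a \<omega>\<close>; the former tends to
  \<open>H a \<omega>\<close> by continuity, the latter to \<open>\<omega>\<close> by (ABS).\<close>
lemma ABS_point_fixed:
  assumes "Hausdorff_space X" and "abelian_group_on E mul e iv"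
    and "continuous_action E mul e X H"
    and "ABS E iv X H \<omega>" "\<omega> \<in> topspace X" and "a \<in> E"
  shows "H a \<omega> = \<omega>"
proof -
  have "E \<noteq> {}" using assms(6) by blast
  have ivE: "iv \<epsilon> \<in> E" if "\<epsilon> \<in> E" for \<epsilon>
    using assms(2) that unfolding abelian_group_on_def by blast
  have "H a \<omega> \<in> topspace X"
    using assms(3,5,6) unfolding continuous_action_def by (meson bij_betwE)
  have "limitin X (H a \<circ> (\<lambda>\<epsilon>. H (iv \<epsilon>) \<omega>)) (H a \<omega>) (towards_inf E)"
    using continuous_map_limit[OF continuous_action_continuous_map[OF assms(3,6)]
        ABS_orbit_limit[OF \<open>E \<noteq> {}\<close> assms(4,5,5)]] .
  moreover have "eventually (\<lambda>\<epsilon>. (H a \<circ> (\<lambda>\<epsilon>. H (iv \<epsilon>) \<omega>)) \<epsilon> = H (iv \<epsilon>) (H a \<omega>))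
                   (towards_inf E)"
    unfolding eventually_towards_inf[OF \<open>E \<noteq> {}\<close>]
    using abelian_action_commute[OF assms(2,3,6) ivE assms(5)] assms(6)
    by (intro bexI[of _ a]) auto
  ultimately have "limitin X (\<lambda>\<epsilon>. H (iv \<epsilon>) (H a \<omega>)) (H a \<omega>) (towards_inf E)"
    by (rule limitin_transform_eventually[rotated])
  from limitin_Hausdorff_unique[OF this ABS_orbit_limit[OF \<open>E \<noteq> {}\<close> assms(4,5)
          \<open>H a \<omega> \<in> topspace X\<close>] towards_inf_nontrivial[OF \<open>E \<noteq> {}\<close>] assms(1)]
  show ?thesis .
qed

theorem proposition2p2:
  fixes E :: "real set" and mul :: "real \<Rightarrow> real \<Rightarrow> real" and e :: real
    and iv :: "real \<Rightarrow> real"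
    and X :: "'a topology" and H :: "real \<Rightarrow> 'a \<Rightarrow> 'a" and \<omega> :: 'a
  assumes "R_group E mul e iv"
    and "Hausdorff_space X" and "locally_compact_space X"
    and "\<exists>x\<in>topspace X. \<exists>y\<in>topspace X. x \<noteq> y"
    and "continuous_action E mul e X H"
    and "\<omega> \<in> topspace X"
    and "ABS E iv X H \<omega>"
  shows "(\<forall>\<epsilon>\<in>E. H \<epsilon> \<omega> = \<omega>) \<and>
         (\<forall>\<omega>'\<in>topspace X. ABS E iv X H \<omega>' \<longrightarrow> \<omega>' = \<omega>)"
proof
  have group: "abelian_group_on E mul e iv"
    using assms(1) by (simp add: R_group_def)
  then have "E \<noteq> {}"
    unfolding abelian_group_on_def by blast
  show "\<forall>\<epsilon>\<in>E. H \<epsilon> \<omega> = \<omega>"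
    using ABS_point_fixed[OF assms(2) group assms(5,7,6)] by blast
  show "\<forall>\<omega>'\<in>topspace X. ABS E iv X H \<omega>' \<longrightarrow> \<omega>' = \<omega>"
    using ABS_point_unique[OF assms(2) \<open>E \<noteq> {}\<close> _ _ assms(7,6)] by blast
qed

end
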